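(* Let $m\geq 1$ and let $g=a_0+a_1z+\cdots+a_mz^m\in\mathbb{Z}[z]$ with $a_0\neq 0$ and $a_m\neq 0$. Suppose that for some index $j\in\{0,\ldots,m-1\}$, exactly $j$ zeros of $g$ (counted with multiplicity) lie in the open disk $\{z\in\mathbb{C}:|z|<1/|a_m|\}$ and the remaining $m-j$ zeros lie outside the closed disk $\{z\in\mathbb{C}:|z|\leq 1\}$. Then $g$ is a product of at most $m-j$ nonconstant irreducible polynomials in $\mathbb{Z}[z]$ (up to a constant factor); i.e., whenever $g=c\,g_1g_2\cdots g_r$ with $c\in\mathbb{Z}$ and each $g_i\in\mathbb{Z}[z]$ nonconstant and irreducible, one has $r\leq m-j$. *)

theory Defs
  imports "HOL-Computational_Algebra.Computational_Algebra" "HOL-Analysis.Analysis"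
begin

definition zeros_in :: "int poly \<Rightarrow> complex set \<Rightarrow> nat" where
  "zeros_in g S = (\<Sum>z\<in>{z. poly (map_poly of_int g) z = 0 \<and> z \<in> S}. order z (map_poly of_int g))"

end

theory Submission
  imports Defs
begin

text \<open>
  For an integer polynomial \<open>h\<close> with \<open>h(0) \<noteq> 0\<close>, the product of the moduli of its complex zeros
  is \<open>|h(0)| / |lc h| \<ge> 1 / |lc h|\<close>, so some zero has modulus at least \<open>1 / |lc h|\<close>.
  If \<open>h\<close> is a nonconstant factor of \<open>g\<close>, then \<open>|lc h| \<le> |lc g|\<close> and every zero of \<open>h\<close> is a
  zero of \<open>g\<close>; since by hypothesis the zeros of \<open>g\<close> all lie either in \<open>|z| < 1 / |lc g|\<close> or in
  \<open>|z| > 1\<close>, every nonconstant factor takes at least one of the \<open>m - j\<close> zeros of \<open>g\<close> outside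
  the closed unit disk.
\<close>

abbreviation complex_of_int_poly :: "int poly \<Rightarrow> complex poly" where
  "complex_of_int_poly \<equiv> map_poly of_int"

lemma map_poly_of_int_mult:
  "map_poly (of_int :: int \<Rightarrow> 'a::comm_ring_1) (p * q) = map_poly of_int p * map_poly of_int q"
  by (intro poly_eqI) (simp add: coeff_map_poly coeff_mult)

lemma map_poly_of_int_eq_0_iff [simp]:
  "map_poly (of_int :: int \<Rightarrow> 'a::ring_char_0) p = 0 \<longleftrightarrow> p = 0"
  by (simp add: map_poly_eq_0_iff)

lemma one_le_abs_of_int_lead_coeff:
  fixes p :: "int poly"
  assumes "p \<noteq> 0"
  shows "1 \<le> \<bar>real_of_int (lead_coeff p)\<bar>"
proof -
  have "lead_coeff p \<noteq> 0" using assms by simp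
  then have "1 \<le> \<bar>lead_coeff p\<bar>" by linarith
  then show ?thesis by (metis of_int_1_le_iff of_int_abs)
qed

lemma zeros_in_eq_size_proots:
  assumes "g \<noteq> 0"
  shows "zeros_in g S = size (filter_mset (\<lambda>z. z \<in> S) (proots (complex_of_int_poly g)))"
proof -
  let ?G = "complex_of_int_poly g"
  let ?F = "filter_mset (\<lambda>z. z \<in> S) (proots ?G)"
  have G: "?G \<noteq> 0" using assms by simp
  have "size ?F = sum (count ?F) (set_mset ?F)"
    by (simp add: size_multiset_overloaded_eq)
  also have "set_mset ?F = {z. poly ?G z = 0 \<and> z \<in> S}"
    using G by auto
  also have "sum (count ?F) {z. poly ?G z = 0 \<and> z \<in> S} = zeros_in g S"
    unfolding zeros_in_def using G by (intro sum.cong) auto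
  finally show ?thesis ..
qed

lemma zeros_in_UNIV: "zeros_in g UNIV = degree g"
proof (cases "g = 0")
  case True
  then show ?thesis by (simp add: zeros_in_def infinite_UNIV_char_0)
next
  case False
  then show ?thesis
    by (simp add: zeros_in_eq_size_proots size_proots_complex degree_map_poly)
qed

lemma zeros_in_Un:
  assumes "g \<noteq> 0" "S \<inter> T = {}"
  shows "zeros_in g (S \<union> T) = zeros_in g S + zeros_in g T"
proof -
  have "filter_mset (\<lambda>z. z \<in> S \<union> T) M = filter_mset (\<lambda>z. z \<in> S) M + filter_mset (\<lambda>z. z \<in> T) M"
    for M :: "complex multiset"
    using assms(2) by (intro multiset_eqI) auto
  then show ?thesis using assms(1) by (simp add: zeros_in_eq_size_proots)
qed

lemma zeros_in_pos_iff:
  assumes "g \<noteq> 0"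
  shows "0 < zeros_in g S \<longleftrightarrow> (\<exists>z\<in>S. poly (complex_of_int_poly g) z = 0)"
  using assms by (auto simp: zeros_in_eq_size_proots zero_less_iff_neq_zero size_eq_0_iff_empty
                             simp flip: set_mset_eq_empty_iff)

lemma root_in_of_zeros_in_eq_degree:
  assumes "g \<noteq> 0" "zeros_in g S = degree g" "poly (complex_of_int_poly g) z = 0"
  shows "z \<in> S"
proof (rule ccontr)
  assume "z \<notin> S"
  have "zeros_in g S + zeros_in g (- S) = degree g"
    using zeros_in_Un[OF assms(1), of S "- S"] by (simp add: zeros_in_UNIV)
  moreover have "0 < zeros_in g (- S)"
    using zeros_in_pos_iff[OF assms(1), of "- S"] assms(3) \<open>z \<notin> S\<close> by auto
  ultimately show False using assms(2) by simp
qed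

lemma zeros_in_mult:
  assumes "p \<noteq> 0" "q \<noteq> 0"
  shows "zeros_in (p * q) S = zeros_in p S + zeros_in q S"
  using assms by (simp add: zeros_in_eq_size_proots map_poly_of_int_mult proots_mult)

lemma zeros_in_smult:
  assumes "c \<noteq> 0"
  shows "zeros_in (smult c p) S = zeros_in p S"
  using assms by (cases "p = 0") (simp_all add: zeros_in_eq_size_proots map_poly_smult)

lemma zeros_in_smult_prod_list:
  assumes "c \<noteq> 0" "0 \<notin> set gs"
  shows "zeros_in (smult c (prod_list gs)) S = (\<Sum>h\<leftarrow>gs. zeros_in h S)"
proof -
  have "zeros_in (prod_list gs) S = (\<Sum>h\<leftarrow>gs. zeros_in h S)"
    using assms(2)
  proof (induction gs)
    case Nil
    then show ?case by (simp add: zeros_in_def)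
  next
    case (Cons h gs)
    then show ?case by (simp add: zeros_in_mult prod_list_zero_iff)
  qed
  then show ?thesis using assms(1) by (simp add: zeros_in_smult)
qed

lemma length_le_zeros_in_smult_prod_list:
  assumes "smult c (prod_list gs) \<noteq> 0" "\<forall>h\<in>set gs. 0 < zeros_in h S"
  shows "length gs \<le> zeros_in (smult c (prod_list gs)) S"
proof -
  have "c \<noteq> 0" "0 \<notin> set gs" using assms(1) by (auto simp: prod_list_zero_iff)
  have "(\<Sum>h\<leftarrow>gs. 1) \<le> (\<Sum>h\<leftarrow>gs. zeros_in h S)"
    using assms(2) by (intro sum_list_mono) (simp add: Suc_le_eq)
  then show ?thesis
    by (simp add: sum_list_triv zeros_in_smult_prod_list[OF \<open>c \<noteq> 0\<close> \<open>0 \<notin> set gs\<close>])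
qed

lemma norm_prod_mset_less:
  fixes M :: "'a::real_normed_field multiset"
  assumes "M \<noteq> {#}" "r \<le> 1" "\<forall>x\<in>#M. norm x < r"
  shows "norm (\<Prod>x\<in>#M. x) < r"
  using assms
proof (induction M)
  case empty
  then show ?case by simp
next
  case (add x M)
  show ?case
  proof (cases "M = {#}")
    case True
    then show ?thesis using add.prems by simp
  next
    case False
    with add have IH: "norm (\<Prod>x\<in>#M. x) < r" by simp
    have "norm (\<Prod>x\<in>#add_mset x M. x) = norm x * norm (\<Prod>x\<in>#M. x)"
      by (simp add: norm_mult)
    also have "\<dots> \<le> norm (\<Prod>x\<in>#M. x)"
      using add.prems by (intro mult_left_le_one_le) auto
    finally show ?thesis using IH by simp
  qed
qed

lemma int_poly_has_root_norm_ge_inverse_lead_coeff: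
  fixes h :: "int poly"
  assumes "degree h > 0" "coeff h 0 \<noteq> 0"
  obtains z where "poly (complex_of_int_poly h) z = 0" "1 / \<bar>real_of_int (lead_coeff h)\<bar> \<le> cmod z"
proof (rule ccontr)
  let ?H = "complex_of_int_poly h"
  define r where "r = 1 / \<bar>real_of_int (lead_coeff h)\<bar>"
  have h: "h \<noteq> 0" using assms(1) by auto
  assume "\<not> thesis"
  have small: "\<forall>z\<in>#proots ?H. cmod z < r"
  proof
    fix z assume "z \<in># proots ?H"
    with h have "poly ?H z = 0" by simp
    with that \<open>\<not> thesis\<close> show "cmod z < r" unfolding r_def by (meson not_le)
  qed
  have lc: "1 \<le> \<bar>real_of_int (lead_coeff h)\<bar>"
    using h by (rule one_le_abs_of_int_lead_coeff)
  have "size (proots ?H) > 0"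
    using assms(1) by (simp add: size_proots_complex degree_map_poly)
  then have "image_mset uminus (proots ?H) \<noteq> {#}" by auto
  moreover have "r \<le> 1" using lc divide_le_eq_1 unfolding r_def by fastforce
  ultimately have roots_small: "cmod (\<Prod>z\<in>#proots ?H. - z) < r"
    using small norm_prod_mset_less[of "image_mset uminus (proots ?H)" r] by simp
  have "poly ?H 0 = lead_coeff ?H * (\<Prod>z\<in>#proots ?H. - z)"
    by (subst (1) complex_poly_decompose_multiset[symmetric]) (simp add: poly_prod_mset)
  then have "cmod (poly ?H 0) = \<bar>real_of_int (lead_coeff h)\<bar> * cmod (\<Prod>z\<in>#proots ?H. - z)"
    by (simp add: norm_mult degree_map_poly coeff_map_poly)
  also have "\<dots> < \<bar>real_of_int (lead_coeff h)\<bar> * r"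
    using roots_small lc h by (intro mult_strict_left_mono) auto
  also have "\<dots> = 1" using h by (simp add: r_def)
  finally have "\<bar>real_of_int (coeff h 0)\<bar> < 1"
    by (simp add: poly_0_coeff_0 coeff_map_poly del: of_int_abs)
  with assms(2) show False by linarith
qed

lemma abs_lead_coeff_le_of_dvd:
  fixes g h :: "int poly"
  assumes "h dvd g" "g \<noteq> 0"
  shows "\<bar>lead_coeff h\<bar> \<le> \<bar>lead_coeff g\<bar>"
proof -
  obtain k where g: "g = h * k" using assms(1) by (rule dvdE)
  with assms(2) have "lead_coeff k \<noteq> 0" by auto
  then have "1 \<le> \<bar>lead_coeff k\<bar>" by linarith
  then have "\<bar>lead_coeff h\<bar> * 1 \<le> \<bar>lead_coeff h\<bar> * \<bar>lead_coeff k\<bar>"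
    by (intro mult_left_mono) auto
  then show ?thesis by (simp add: g lead_coeff_mult abs_mult)
qed

lemma divisor_has_zero_outside_unit_disk:
  fixes g h :: "int poly"
  assumes "h dvd g" "g \<noteq> 0" "coeff g 0 \<noteq> 0" "degree h > 0"
    and roots_g: "\<And>z. poly (complex_of_int_poly g) z = 0 \<Longrightarrow>
                     cmod z < 1 / \<bar>real_of_int (lead_coeff g)\<bar> \<or> cmod z > 1"
  shows "0 < zeros_in h {z. cmod z > 1}"
proof -
  obtain k where g: "g = h * k" using assms(1) by (rule dvdE)
  have "h \<noteq> 0" using assms(4) by auto
  have "coeff h 0 \<noteq> 0" using assms(3) by (simp add: g coeff_mult_0)
  then obtain z where root_h: "poly (complex_of_int_poly h) z = 0"
    and z_large: "1 / \<bar>real_of_int (lead_coeff h)\<bar> \<le> cmod z"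
    using int_poly_has_root_norm_ge_inverse_lead_coeff assms(4) by blast
  have "poly (complex_of_int_poly g) z = 0"
    using root_h by (simp add: g map_poly_of_int_mult)
  moreover have "1 / \<bar>real_of_int (lead_coeff g)\<bar> \<le> 1 / \<bar>real_of_int (lead_coeff h)\<bar>"
    using abs_lead_coeff_le_of_dvd[OF assms(1,2)] one_le_abs_of_int_lead_coeff[OF \<open>h \<noteq> 0\<close>]
      one_le_abs_of_int_lead_coeff[OF assms(2)]
    by (intro frac_le) (auto simp del: of_int_abs)
  ultimately have "cmod z > 1" using roots_g z_large by fastforce
  with \<open>h \<noteq> 0\<close> show ?thesis using root_h zeros_in_pos_iff by blast
qed

theorem lemma8:
  fixes g :: "int poly" and m j :: nat
  assumes "m \<ge> 1" and "degree g = m"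
    and "coeff g 0 \<noteq> 0" and "coeff g m \<noteq> 0"
    and "j < m"
    and "zeros_in g {z. cmod z < 1 / \<bar>real_of_int (coeff g m)\<bar>} = j"
    and "zeros_in g {z. cmod z > 1} = m - j"
  shows "\<forall>(c::int) (gs::int poly list).
           g = smult c (prod_list gs) \<and> (\<forall>h\<in>set gs. degree h > 0 \<and> irreducible h)
           \<longrightarrow> length gs \<le> m - j"
proof (intro allI impI)
  fix c :: int and gs :: "int poly list"
  assume "g = smult c (prod_list gs) \<and> (\<forall>h\<in>set gs. degree h > 0 \<and> irreducible h)"
  then have g: "g = smult c (prod_list gs)" and deg: "\<And>h. h \<in> set gs \<Longrightarrow> degree h > 0"
    by auto
  have "g \<noteq> 0" using assms(1,2) by auto
  let ?inner = "{z. cmod z < 1 / \<bar>real_of_int (lead_coeff g)\<bar>}" and ?outer = "{z. cmod z > 1}"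
  have "1 / \<bar>real_of_int (lead_coeff g)\<bar> \<le> 1"
    using one_le_abs_of_int_lead_coeff[OF \<open>g \<noteq> 0\<close>] divide_le_eq_1 by fastforce
  then have "?inner \<inter> ?outer = {}" by auto
  then have "zeros_in g (?inner \<union> ?outer) = degree g"
    using zeros_in_Un[OF \<open>g \<noteq> 0\<close>] assms(2,5-7) by simp
  then have roots_g: "\<And>z. poly (complex_of_int_poly g) z = 0 \<Longrightarrow>
                       cmod z < 1 / \<bar>real_of_int (lead_coeff g)\<bar> \<or> cmod z > 1"
    using root_in_of_zeros_in_eq_degree[OF \<open>g \<noteq> 0\<close>] by blast
  have "\<forall>h\<in>set gs. 0 < zeros_in h ?outer"
  proof
    fix h assume "h \<in> set gs"
    then have "h dvd g" by (simp add: g prod_list_dvd dvd_smult)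
    with \<open>h \<in> set gs\<close> show "0 < zeros_in h ?outer"
      using divisor_has_zero_outside_unit_disk \<open>g \<noteq> 0\<close> assms(3) deg roots_g by blast
  qed
  then show "length gs \<le> m - j"
    using length_le_zeros_in_smult_prod_list \<open>g \<noteq> 0\<close> assms(7) by (fastforce simp: g)
qed

end
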